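(* Let $\Phi$ be an $(s,d)$-product-sparse formula over the variables $Y\cup Z$, $Y=\{y_1,\dots,y_m\}$, $Z=\{z_1,\dots,z_m\}$, and let $v$ be a node of $\Phi$ with product-sparse depth $d(v)$. If $v$ is $k$-weak, then $\mathrm{maxrank}(M_v)\le 2^{s\cdot d(v)}\cdot|\Phi_v|\cdot 2^{b(v)-k/2}$.
   Context: $\mathbb{F}$ is a field. For $g\in\mathbb{F}[Y,Z]$, $M_g$ has rows indexed by monic multilinear monomials $p$ in $Y$ and columns by monic multilinear monomials $q$ in $Z$, with $M_g(p,q)=G$ iff $g=pq\,G+Q$ uniquely with $G$ containing only variables present in $p,q$ and $Q$ having no monomial divisible by $pq$ that contains only variables present in $p,q$; $\mathrm{maxrank}(M_g)=\max_{S:Y\cup Z\to\mathbb{F}}\mathrm{rank}(M_g|_S)$. $M_v$ denotes $M_g$ for the polynomial $g$ computed at $v$. A formula is a fan-in-2 arithmetic circuit (leaves labelled by variables or constants, internal plus/product gates) whose underlying graph is a tree. $\Phi_v$ is the subformula rooted at $v$ and $|\Phi_v|$ its number of gates; $X_v$ (resp. $Y_v$, $Z_v$) is the set of variables (resp. those in $Y$, in $Z$) appearing in $\Phi_v$. A product gate with children $v_1,v_2$ is disjoint if $X_{v_1}\cap X_{v_2}=\emptyset$ and $s$-sparse if the polynomial computed at one of $v_1,v_2$ has at most $2^s$ monomials. The product-sparse depth of $v$ is the maximum number of non-disjoint product gates on any path from a leaf to $v$. $\Phi$ is $(s,d)$-product-sparse if every product gate is disjoint or $s$-sparse, and $d$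 is the product-sparse depth of the root. Let $a(v)=\min\{|Y_v|,|Z_v|\}$ and $b(v)=(|Y_v|+|Z_v|)/2$. A node $v$ is $k$-unbalanced if $b(v)-a(v)\ge k$. A simple path $\gamma$ from a leaf to $v$ is $k$-unbalanced if it contains a $k$-unbalanced node, and central if for every edge from $u_1$ to $u$ on $\gamma$, $b(u)\le 2b(u_1)$. A node $v$ is $k$-weak if every central path reaching $v$ is $k$-unbalanced. *)

theory Defs
  imports "HOL-Library.Poly_Mapping" "Jordan_Normal_Form.DL_Rank"
begin

text \<open>Variables: Yv i stands for y_i, Zv i stands for z_i (indices 1..m).\<close>
datatype var = Yv nat | Zv nat

definition Yset :: "nat \<Rightarrow> var set" where "Yset m = Yv ` {1..m}"
definition Zset :: "nat \<Rightarrow> var set" where "Zset m = Zv ` {1..m}"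

text \<open>Polynomials in F[Y,Z]: finitely supported maps from monomials (exponent vectors)
  to coefficients; multiplication is convolution.\<close>
type_synonym 'a mpoly = "(var \<Rightarrow>\<^sub>0 nat) \<Rightarrow>\<^sub>0 'a"

definition pvar :: "var \<Rightarrow> 'a::{zero,one} mpoly" where
  "pvar x = Poly_Mapping.single (Poly_Mapping.single x 1) 1"

definition pconst :: "'a::zero \<Rightarrow> 'a mpoly" where
  "pconst c = Poly_Mapping.single 0 c"

definition peval :: "(var \<Rightarrow> 'a::comm_semiring_1) \<Rightarrow> 'a mpoly \<Rightarrow> 'a" where
  "peval S g = (\<Sum>\<mu>\<in>Poly_Mapping.keys g. Poly_Mapping.lookup g \<mu> * (\<Prod>x\<in>Poly_Mapping.keys \<mu>. S x ^ Poly_Mapping.lookup \<mu> x))"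

definition mlmono :: "var set \<Rightarrow> (var \<Rightarrow>\<^sub>0 nat)" where
  "mlmono A = (\<Sum>x\<in>A. Poly_Mapping.single x 1)"

datatype 'a formula = Var var | Cst 'a | Plus "'a formula" "'a formula" | Prod "'a formula" "'a formula"

fun fpoly :: "'a::comm_semiring_1 formula \<Rightarrow> 'a mpoly" where
  "fpoly (Var x) = pvar x"
| "fpoly (Cst c) = pconst c"
| "fpoly (Plus f g) = fpoly f + fpoly g"
| "fpoly (Prod f g) = fpoly f * fpoly g"

fun fvars :: "'a formula \<Rightarrow> var set" where
  "fvars (Var x) = {x}"
| "fvars (Cst c) = {}"
| "fvars (Plus f g) = fvars f \<union> fvars g"
| "fvars (Prod f g) = fvars f \<union> fvars g"

text \<open>Size |Phi_v|: number of gates, counting the leaves (input gates) as well.\<close>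
fun fsize :: "'a formula \<Rightarrow> nat" where
  "fsize (Var x) = 1"
| "fsize (Cst c) = 1"
| "fsize (Plus f g) = fsize f + fsize g + 1"
| "fsize (Prod f g) = fsize f + fsize g + 1"

text \<open>Nodes are addressed by positions: paths from the root (False = left child,
  True = right child).\<close>
fun positions :: "'a formula \<Rightarrow> bool list set" where
  "positions (Var x) = {[]}"
| "positions (Cst c) = {[]}"
| "positions (Plus f g) = insert [] ((Cons False) ` positions f \<union> (Cons True) ` positions g)"
| "positions (Prod f g) = insert [] ((Cons False) ` positions f \<union> (Cons True) ` positions g)"

fun subf :: "'a formula \<Rightarrow> bool list \<Rightarrow> 'a formula" where
  "subf f [] = f"
| "subf (Plus f g) (b # p) = (if b then subf g p else subf f p)"
| "subf (Prod f g) (b # p) = (if b then subf g p else subf f p)"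
| "subf f (b # p) = f"

fun is_leaf :: "'a formula \<Rightarrow> bool" where
  "is_leaf (Var x) = True"
| "is_leaf (Cst c) = True"
| "is_leaf _ = False"

text \<open>Positions of leaves; a (directed, leaf-to-root) path from a leaf at position q to the
  root consists of the nodes at positions take i q, i = length q, ..., 0.\<close>
definition leafpos :: "'a formula \<Rightarrow> bool list set" where
  "leafpos f = {q \<in> positions f. is_leaf (subf f q)}"

definition disjoint_prod :: "'a formula \<Rightarrow> bool" where
  "disjoint_prod f = (case f of Prod f1 f2 \<Rightarrow> fvars f1 \<inter> fvars f2 = {} | _ \<Rightarrow> False)"

definition nondisjoint_prod :: "'a formula \<Rightarrow> bool" where
  "nondisjoint_prod f = (case f of Prod f1 f2 \<Rightarrow> fvars f1 \<inter> fvars f2 \<noteq> {} | _ \<Rightarrow> False)"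

definition sparse_prod :: "nat \<Rightarrow> 'a::comm_semiring_1 formula \<Rightarrow> bool" where
  "sparse_prod s f = (case f of Prod f1 f2 \<Rightarrow>
      card (Poly_Mapping.keys (fpoly f1)) \<le> 2 ^ s \<or> card (Poly_Mapping.keys (fpoly f2)) \<le> 2 ^ s | _ \<Rightarrow> False)"

definition ps_depth :: "'a formula \<Rightarrow> nat" where
  "ps_depth f = Max ((\<lambda>q. card {i. i \<le> length q \<and> nondisjoint_prod (subf f (take i q))}) ` leafpos f)"

definition product_sparse :: "nat \<Rightarrow> nat \<Rightarrow> 'a::comm_semiring_1 formula \<Rightarrow> bool" where
  "product_sparse s d f =
     ((\<forall>p\<in>positions f. (\<exists>f1 f2. subf f p = Prod f1 f2) \<longrightarrow>
         disjoint_prod (subf f p) \<or> sparse_prod s (subf f p))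
      \<and> d = ps_depth f)"

definition aY :: "nat \<Rightarrow> 'a formula \<Rightarrow> real" where
  "aY m f = real (min (card (fvars f \<inter> Yset m)) (card (fvars f \<inter> Zset m)))"

definition bY :: "nat \<Rightarrow> 'a formula \<Rightarrow> real" where
  "bY m f = (real (card (fvars f \<inter> Yset m)) + real (card (fvars f \<inter> Zset m))) / 2"

definition unbalanced :: "nat \<Rightarrow> real \<Rightarrow> 'a formula \<Rightarrow> bool" where
  "unbalanced m k f = (bY m f - aY m f \<ge> k)"

text \<open>For a formula f (rooted at the node v) and a leaf position q of f: the path from
  that leaf up to v.\<close>
definition path_unbalanced :: "nat \<Rightarrow> real \<Rightarrow> 'a formula \<Rightarrow> bool list \<Rightarrow> bool" where
  "path_unbalanced m k f q = (\<exists>i\<le>length q. unbalanced m k (subf f (take i q)))"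

text \<open>Edge from child u1 = node at take (Suc i) q to parent u = node at take i q.\<close>
definition path_central :: "nat \<Rightarrow> 'a formula \<Rightarrow> bool list \<Rightarrow> bool" where
  "path_central m f q = (\<forall>i<length q. bY m (subf f (take i q)) \<le> 2 * bY m (subf f (take (Suc i) q)))"

definition weak :: "nat \<Rightarrow> real \<Rightarrow> 'a formula \<Rightarrow> bool" where
  "weak m k f = (\<forall>q\<in>leafpos f. path_central m f q \<longrightarrow> path_unbalanced m k f q)"

text \<open>Entry M_g(p,q) for multilinear monomials given by sets p (of Y-variables) and q
  (of Z-variables): the unique G with g = pq G + Q as in the paper.\<close>
definition Mentry :: "'a::comm_semiring_1 mpoly \<Rightarrow> var set \<Rightarrow> var set \<Rightarrow> 'a mpoly" where
  "Mentry g p q = (THE G. (\<forall>\<mu>\<in>Poly_Mapping.keys G. Poly_Mapping.keys \<mu> \<subseteq> p \<union> q) \<and>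
      (\<exists>Q. g = Poly_Mapping.single (mlmono (p \<union> q)) 1 * G + Q \<and>
           (\<forall>\<mu>\<in>Poly_Mapping.keys Q. \<not> ((\<exists>\<nu>. \<mu> = mlmono (p \<union> q) + \<nu>) \<and> Poly_Mapping.keys \<mu> \<subseteq> p \<union> q))))"

text \<open>Enumeration of the multilinear monomials in Y (resp. Z) by numbers below 2^m
  (bit j of the index says whether y_(j+1) (resp. z_(j+1)) occurs).\<close>
definition Ysub :: "nat \<Rightarrow> nat \<Rightarrow> var set" where
  "Ysub m i = {Yv (Suc j) | j. j < m \<and> bit i j}"
definition Zsub :: "nat \<Rightarrow> nat \<Rightarrow> var set" where
  "Zsub m i = {Zv (Suc j) | j. j < m \<and> bit i j}"

definition Mmat_eval :: "nat \<Rightarrow> 'a::field mpoly \<Rightarrow> (var \<Rightarrow> 'a) \<Rightarrow> 'a mat" where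
  "Mmat_eval m g S = mat (2 ^ m) (2 ^ m) (\<lambda>(i, j). peval S (Mentry g (Ysub m i) (Zsub m j)))"

definition maxrank :: "nat \<Rightarrow> 'a::field mpoly \<Rightarrow> nat" where
  "maxrank m g = Max (range (\<lambda>S. vec_space.rank (2 ^ m) (Mmat_eval m g S)))"

end

theory Submission
  imports Defs
begin

text \<open>Fix an evaluation \<open>S\<close> of the variables. The evaluated entry of \<open>M_g\<close> at \<open>(p, q)\<close>
  depends only on \<open>T = p \<union> q\<close> and is linear in \<open>g\<close>. Say that a function \<open>F\<close> on variable
  sets has split rank at most \<open>B\<close> if, for \<open>Y\<close>-sets \<open>p\<close> and \<open>Z\<close>-sets \<open>q\<close>, \<open>F (p \<union> q)\<close> is a
  sum of at most \<open>B\<close> products \<open>u p * w q\<close>; this bounds the rank of the evaluated matrix.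
  Split rank is subadditive under sums, unchanged by multiplication with a variable (which
  is absorbed into the \<open>Y\<close>- or the \<open>Z\<close>-factor), hence grows at most by the number of
  monomials of a sparse factor, is multiplicative for products in disjoint variables, and is
  trivially at most \<open>2^a(v)\<close>.

  At an unbalanced node
  \<open>a(v) \<le> b(v) - k/2\<close>, so the trivial bound suffices. Otherwise weakness passes to every
  child \<open>c\<close> with \<open>b(v) \<le> 2 b(c)\<close>, while a child with \<open>b(v) > 2 b(c)\<close> satisfies
  \<open>a(c) \<le> b(c) < b(v)/2 \<le> b(v) - k/2\<close> (a weak node has \<open>k \<le> b(v)\<close>) and is bounded
  trivially. A sum gate adds the bounds of its children; at a disjoint product
  \<open>b(v) = b(v\<^sub>1) + b(v\<^sub>2)\<close>, so one child stays weak and the other contributes at most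
  \<open>2^b\<close>; a non-disjoint product has a factor with at most \<open>2^s\<close> monomials, paid for by
  one level of product-sparse depth.\<close>

section \<open>Evaluated entries as a linear functional\<close>

lemma keys_add_monomials:
  "Poly_Mapping.keys ((\<mu> :: 'b \<Rightarrow>\<^sub>0 nat) + \<nu>) = Poly_Mapping.keys \<mu> \<union> Poly_Mapping.keys \<nu>"
  by (auto simp: in_keys_iff lookup_add)

lemma poly_mapping_sum_singles:
  "g = (\<Sum>\<mu>\<in>Poly_Mapping.keys g. Poly_Mapping.single \<mu> (Poly_Mapping.lookup g \<mu>))"
  by (rule poly_mapping_eqI)
     (auto simp: lookup_sum lookup_single when_def in_keys_iff intro: sum.neutral)

text \<open>Evaluating the entry of \<open>M_g\<close> at \<open>(p, q)\<close> under \<open>S\<close> gives \<open>Mval S g (p \<union> q)\<close>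
  (lemma \<open>peval_Mentry\<close>): only the monomials of \<open>g\<close> whose support is exactly \<open>p \<union> q\<close>
  contribute, each with one factor of every variable of \<open>p \<union> q\<close> divided out.\<close>

definition mono_weight :: "(var \<Rightarrow> 'a::comm_semiring_1) \<Rightarrow> var set \<Rightarrow> (var \<Rightarrow>\<^sub>0 nat) \<Rightarrow> 'a" where
  "mono_weight S T \<mu> =
     (if Poly_Mapping.keys \<mu> = T then \<Prod>x\<in>T. S x ^ (Poly_Mapping.lookup \<mu> x - 1) else 0)"

definition Mval :: "(var \<Rightarrow> 'a::comm_semiring_1) \<Rightarrow> 'a mpoly \<Rightarrow> var set \<Rightarrow> 'a" where
  "Mval S g T = (\<Sum>\<mu>\<in>Poly_Mapping.keys g. Poly_Mapping.lookup g \<mu> * mono_weight S T \<mu>)"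

lemma Mval_eq_sum_superset:
  assumes "finite K" "Poly_Mapping.keys g \<subseteq> K"
  shows "Mval S g T = (\<Sum>\<mu>\<in>K. Poly_Mapping.lookup g \<mu> * mono_weight S T \<mu>)"
  unfolding Mval_def by (rule sum.mono_neutral_left) (use assms in \<open>auto simp: in_keys_iff\<close>)

lemma Mval_add: "Mval S (g + h) T = Mval S g T + Mval S h T"
proof -
  let ?K = "Poly_Mapping.keys g \<union> Poly_Mapping.keys h"
  have "Mval S (g + h) T = (\<Sum>\<mu>\<in>?K. Poly_Mapping.lookup (g + h) \<mu> * mono_weight S T \<mu>)"
    by (rule Mval_eq_sum_superset) (auto simp: keys_add)
  also have "\<dots> = Mval S g T + Mval S h T"
    by (simp add: Mval_eq_sum_superset[of ?K] lookup_add distrib_right sum.distrib)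
  finally show ?thesis .
qed

lemma Mval_zero [simp]: "Mval S 0 T = 0"
  by (simp add: Mval_def)

lemma Mval_single [simp]: "Mval S (Poly_Mapping.single \<mu> c) T = c * mono_weight S T \<mu>"
  by (simp add: Mval_def)

lemma Mval_sum: "Mval S (\<Sum>i\<in>I. g i) T = (\<Sum>i\<in>I. Mval S (g i) T)"
  by (induction I rule: infinite_finite_induct) (simp_all add: Mval_add)

lemma Mval_mult:
  "Mval S (g * h) T = (\<Sum>\<mu>\<in>Poly_Mapping.keys g. \<Sum>\<nu>\<in>Poly_Mapping.keys h.
      Poly_Mapping.lookup g \<mu> * Poly_Mapping.lookup h \<nu> * mono_weight S T (\<mu> + \<nu>))"
proof -
  have "g * h = (\<Sum>\<mu>\<in>Poly_Mapping.keys g. \<Sum>\<nu>\<in>Poly_Mapping.keys h.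
      Poly_Mapping.single (\<mu> + \<nu>) (Poly_Mapping.lookup g \<mu> * Poly_Mapping.lookup h \<nu>))"
    by (subst poly_mapping_sum_singles[of g], subst poly_mapping_sum_singles[of h])
       (simp add: sum_product mult_single)
  then show ?thesis by (simp add: Mval_sum)
qed

lemma prod_powers_add_single:
  assumes "finite T" "x \<in> T"
  shows "(\<Prod>y\<in>T. S y ^ (Poly_Mapping.lookup (Poly_Mapping.single x 1 + \<nu>) y - 1))
      = S x ^ Poly_Mapping.lookup \<nu> x * (\<Prod>y\<in>T - {x}. S y ^ (Poly_Mapping.lookup \<nu> y - 1))"
proof -
  have "(\<Prod>y\<in>T - {x}. S y ^ (Poly_Mapping.lookup (Poly_Mapping.single x 1 + \<nu>) y - 1))
      = (\<Prod>y\<in>T - {x}. S y ^ (Poly_Mapping.lookup \<nu> y - 1))"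
    by (rule prod.cong) (auto simp: lookup_add lookup_single)
  moreover have "Poly_Mapping.lookup (Poly_Mapping.single x 1 + \<nu>) x - 1 = Poly_Mapping.lookup \<nu> x"
    by (simp add: lookup_add)
  ultimately show ?thesis by (simp only: prod.remove[OF assms])
qed

lemma mono_weight_add_single:
  "mono_weight S T (Poly_Mapping.single x 1 + \<nu>) =
     (if x \<in> T then S x * mono_weight S T \<nu> + mono_weight S (T - {x}) \<nu> else 0)"
proof -
  let ?\<mu> = "Poly_Mapping.single x 1 + \<nu>"
  have keys: "Poly_Mapping.keys ?\<mu> = insert x (Poly_Mapping.keys \<nu>)"
    by (simp add: keys_add_monomials)
  consider "x \<notin> T" | "x \<in> T" "x \<in> Poly_Mapping.keys \<nu>" | "x \<in> T" "x \<notin> Poly_Mapping.keys \<nu>"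
    by blast
  then show ?thesis
  proof cases
    case 1
    then show ?thesis unfolding mono_weight_def keys by auto
  next
    case 2
    have "(\<Prod>y\<in>T. S y ^ (Poly_Mapping.lookup ?\<mu> y - 1))
        = S x * (\<Prod>y\<in>T. S y ^ (Poly_Mapping.lookup \<nu> y - 1))" if T: "Poly_Mapping.keys \<nu> = T"
    proof -
      have "finite T" using T by auto
      have "Poly_Mapping.lookup \<nu> x = Suc (Poly_Mapping.lookup \<nu> x - 1)"
        using 2 by (simp add: in_keys_iff)
      then have "S x ^ Poly_Mapping.lookup \<nu> x = S x * S x ^ (Poly_Mapping.lookup \<nu> x - 1)"
        by (metis power_Suc)
      then show ?thesis
        by (simp only: prod_powers_add_single[OF \<open>finite T\<close> 2(1)] prod.remove[OF \<open>finite T\<close> 2(1)] mult.assoc)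
    qed
    moreover have "Poly_Mapping.keys \<nu> \<noteq> T - {x}" using 2 by blast
    ultimately show ?thesis using 2 unfolding mono_weight_def keys by (simp add: insert_absorb)
  next
    case 3
    have "Poly_Mapping.keys \<nu> \<noteq> T" using 3 by blast
    moreover have "(\<Prod>y\<in>T. S y ^ (Poly_Mapping.lookup ?\<mu> y - 1))
        = (\<Prod>y\<in>T - {x}. S y ^ (Poly_Mapping.lookup \<nu> y - 1))" if "Poly_Mapping.keys \<nu> = T - {x}"
    proof -
      have "finite T" using that 3(1) by (metis finite_insert finite_keys insert_Diff)
      moreover have "Poly_Mapping.lookup \<nu> x = 0" using 3 by (simp add: in_keys_iff)
      ultimately show ?thesis by (simp only: prod_powers_add_single[OF _ 3(1)] power_0 mult_1_left)
    qed
    moreover have "insert x (Poly_Mapping.keys \<nu>) = T \<longleftrightarrow> Poly_Mapping.keys \<nu> = T - {x}"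
      using 3 by blast
    ultimately show ?thesis using 3 unfolding mono_weight_def keys by simp
  qed
qed

lemma keys_pvar: "Poly_Mapping.keys (pvar x :: 'a::comm_semiring_1 mpoly) = {Poly_Mapping.single x 1}"
  by (simp add: pvar_def)

lemma Mval_pvar_mult:
  "Mval S (pvar x * g) T = (if x \<in> T then S x * Mval S g T + Mval S g (T - {x}) else 0)"
proof -
  have "Mval S (pvar x * g) T = (\<Sum>\<nu>\<in>Poly_Mapping.keys g.
      Poly_Mapping.lookup g \<nu> * mono_weight S T (Poly_Mapping.single x 1 + \<nu>))"
    unfolding Mval_mult keys_pvar by (simp add: pvar_def)
  also have "\<dots> = (if x \<in> T then S x * Mval S g T + Mval S g (T - {x}) else 0)"
    unfolding mono_weight_add_single Mval_def by (simp add: sum_distrib_left sum.distrib algebra_simps)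
  finally show ?thesis .
qed

lemma Mval_mult_eq_sum_monomials:
  "Mval S (h * g) T = (\<Sum>\<mu>\<in>Poly_Mapping.keys h. Poly_Mapping.lookup h \<mu> * Mval S (Poly_Mapping.single \<mu> 1 * g) T)"
  unfolding Mval_mult by (simp add: sum_distrib_left algebra_simps)

lemma mono_weight_add_disjoint:
  assumes "Poly_Mapping.keys \<mu>1 \<subseteq> X1" "Poly_Mapping.keys \<mu>2 \<subseteq> X2" "X1 \<inter> X2 = {}"
  shows "mono_weight S T (\<mu>1 + \<mu>2) =
    (if T \<subseteq> X1 \<union> X2 then mono_weight S (T \<inter> X1) \<mu>1 * mono_weight S (T \<inter> X2) \<mu>2 else 0)"
proof -
  have keys: "Poly_Mapping.keys (\<mu>1 + \<mu>2) = Poly_Mapping.keys \<mu>1 \<union> Poly_Mapping.keys \<mu>2"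
    by (rule keys_add_monomials)
  have exps1: "Poly_Mapping.lookup (\<mu>1 + \<mu>2) y = Poly_Mapping.lookup \<mu>1 y" if "y \<in> X1" for y
    using that assms by (auto simp: lookup_add in_keys_iff)
  have exps2: "Poly_Mapping.lookup (\<mu>1 + \<mu>2) y = Poly_Mapping.lookup \<mu>2 y" if "y \<in> X2" for y
    using that assms by (auto simp: lookup_add in_keys_iff)
  show ?thesis
  proof (cases "Poly_Mapping.keys \<mu>1 = T \<inter> X1 \<and> Poly_Mapping.keys \<mu>2 = T \<inter> X2 \<and> T \<subseteq> X1 \<union> X2")
    case True
    then have "T = Poly_Mapping.keys \<mu>1 \<union> Poly_Mapping.keys \<mu>2" by blast
    then have "finite T" by simp
    have T: "T = (T \<inter> X1) \<union> (T \<inter> X2)" using True by blast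
    have "(\<Prod>y\<in>T. S y ^ (Poly_Mapping.lookup (\<mu>1 + \<mu>2) y - 1))
       = (\<Prod>y\<in>T \<inter> X1. S y ^ (Poly_Mapping.lookup (\<mu>1 + \<mu>2) y - 1)) *
         (\<Prod>y\<in>T \<inter> X2. S y ^ (Poly_Mapping.lookup (\<mu>1 + \<mu>2) y - 1))"
      using \<open>finite T\<close> assms(3) by (subst T, subst prod.union_disjoint) auto
    also have "\<dots> = (\<Prod>y\<in>T \<inter> X1. S y ^ (Poly_Mapping.lookup \<mu>1 y - 1)) *
         (\<Prod>y\<in>T \<inter> X2. S y ^ (Poly_Mapping.lookup \<mu>2 y - 1))"
      by (intro arg_cong2[where f = "(*)"] prod.cong) (auto simp: exps1 exps2)
    moreover have "Poly_Mapping.keys (\<mu>1 + \<mu>2) = T" using keys True by blast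
    ultimately show ?thesis using True by (simp add: mono_weight_def)
  next
    case False
    then have "Poly_Mapping.keys (\<mu>1 + \<mu>2) \<noteq> T \<or> \<not> T \<subseteq> X1 \<union> X2" using keys assms by auto
    then show ?thesis using False keys assms by (auto simp: mono_weight_def)
  qed
qed

lemma Mval_mult_disjoint:
  assumes "\<forall>\<mu>\<in>Poly_Mapping.keys g. Poly_Mapping.keys \<mu> \<subseteq> X1"
    "\<forall>\<mu>\<in>Poly_Mapping.keys h. Poly_Mapping.keys \<mu> \<subseteq> X2" "X1 \<inter> X2 = {}"
  shows "Mval S (g * h) T = (if T \<subseteq> X1 \<union> X2 then Mval S g (T \<inter> X1) * Mval S h (T \<inter> X2) else 0)"
proof -
  have "Mval S (g * h) T = (\<Sum>\<mu>\<in>Poly_Mapping.keys g. \<Sum>\<nu>\<in>Poly_Mapping.keys h.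
      Poly_Mapping.lookup g \<mu> * Poly_Mapping.lookup h \<nu> *
      (if T \<subseteq> X1 \<union> X2 then mono_weight S (T \<inter> X1) \<mu> * mono_weight S (T \<inter> X2) \<nu> else 0))"
    unfolding Mval_mult
    by (intro sum.cong refl, subst mono_weight_add_disjoint[of _ X1 _ X2]) (use assms in auto)
  also have "\<dots> = (if T \<subseteq> X1 \<union> X2 then Mval S g (T \<inter> X1) * Mval S h (T \<inter> X2) else 0)"
    by (simp add: Mval_def sum_product algebra_simps)
  finally show ?thesis .
qed

lemma Mval_eq_0_outside:
  assumes "\<forall>\<mu>\<in>Poly_Mapping.keys g. Poly_Mapping.keys \<mu> \<subseteq> V" "\<not> T \<subseteq> V"
  shows "Mval S g T = 0"
  unfolding Mval_def by (rule sum.neutral) (use assms in \<open>auto simp: mono_weight_def\<close>)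

section \<open>Split rank\<close>

definition split_rank_le :: "(var set \<Rightarrow> 'a::comm_semiring_1) \<Rightarrow> real \<Rightarrow> bool" where
  "split_rank_le F B \<longleftrightarrow> (\<exists>L. real (length L) \<le> B \<and>
     (\<forall>p q. p \<subseteq> range Yv \<longrightarrow> q \<subseteq> range Zv \<longrightarrow> F (p \<union> q) = (\<Sum>(u, w)\<leftarrow>L. u p * w q)))"

lemma split_rank_le_mono: "split_rank_le F B \<Longrightarrow> B \<le> B' \<Longrightarrow> split_rank_le F B'"
  unfolding split_rank_le_def by force

lemma split_rank_le_zero: "split_rank_le (\<lambda>T. 0) 0"
  unfolding split_rank_le_def by (intro exI[of _ "[]"]) simp

lemma split_rank_le_add:
  assumes "split_rank_le F B1" "split_rank_le G B2" "\<And>T. H T = F T + G T"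
  shows "split_rank_le H (B1 + B2)"
proof -
  obtain L1 where L1: "real (length L1) \<le> B1"
    "\<And>p q. p \<subseteq> range Yv \<Longrightarrow> q \<subseteq> range Zv \<Longrightarrow> F (p \<union> q) = (\<Sum>(u, w)\<leftarrow>L1. u p * w q)"
    using assms(1) unfolding split_rank_le_def by blast
  obtain L2 where L2: "real (length L2) \<le> B2"
    "\<And>p q. p \<subseteq> range Yv \<Longrightarrow> q \<subseteq> range Zv \<Longrightarrow> G (p \<union> q) = (\<Sum>(u, w)\<leftarrow>L2. u p * w q)"
    using assms(2) unfolding split_rank_le_def by blast
  show ?thesis
    unfolding split_rank_le_def using L1 L2 assms(3) by (intro exI[of _ "L1 @ L2"]) auto
qed

lemma split_rank_le_scale:
  assumes "split_rank_le F B"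
  shows "split_rank_le (\<lambda>T. c * F T) B"
proof -
  obtain L where L: "real (length L) \<le> B"
    "\<And>p q. p \<subseteq> range Yv \<Longrightarrow> q \<subseteq> range Zv \<Longrightarrow> F (p \<union> q) = (\<Sum>(u, w)\<leftarrow>L. u p * w q)"
    using assms unfolding split_rank_le_def by blast
  show ?thesis unfolding split_rank_le_def using L
    by (intro exI[of _ "map (\<lambda>(u, w). (\<lambda>p. c * u p, w)) L"])
       (simp add: split_def o_def sum_list_const_mult mult.assoc)
qed

lemma split_rank_le_sum:
  assumes "finite K" "\<And>\<mu>. \<mu> \<in> K \<Longrightarrow> split_rank_le (G \<mu>) B"
  shows "split_rank_le (\<lambda>T. \<Sum>\<mu>\<in>K. c \<mu> * G \<mu> T) (real (card K) * B)"
  using assms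
proof (induction K rule: finite_induct)
  case empty
  then show ?case by (simp add: split_rank_le_zero)
next
  case (insert \<mu> K)
  have "split_rank_le (\<lambda>T. \<Sum>\<mu>\<in>insert \<mu> K. c \<mu> * G \<mu> T) (B + real (card K) * B)"
    by (rule split_rank_le_add[OF split_rank_le_scale]) (use insert in auto)
  then show ?case using insert by (simp add: algebra_simps)
qed

lemma split_rank_le_insert_var:
  assumes "split_rank_le F B"
  shows "split_rank_le (\<lambda>T. if x \<in> T then c * F T + F (T - {x}) else 0) B"
proof -
  obtain L where L: "real (length L) \<le> B"
    "\<And>p q. p \<subseteq> range Yv \<Longrightarrow> q \<subseteq> range Zv \<Longrightarrow> F (p \<union> q) = (\<Sum>(u, w)\<leftarrow>L. u p * w q)"
    using assms unfolding split_rank_le_def by blast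
  show ?thesis
  proof (cases x)
    case (Yv j)
    then have "x \<notin> q" "p \<union> q - {x} = (p - {x}) \<union> q" if "q \<subseteq> range Zv" for p q
      using that by auto
    moreover have "p - {x} \<subseteq> range Yv" if "p \<subseteq> range Yv" for p using that by blast
    ultimately show ?thesis unfolding split_rank_le_def using L
      by (intro exI[of _ "map (\<lambda>(u, w). (\<lambda>p. if x \<in> p then c * u p + u (p - {x}) else 0, w)) L"])
         (auto simp: split_def o_def sum_list_const_mult sum_list_addf algebra_simps)
  next
    case (Zv j)
    then have "x \<notin> p" "p \<union> q - {x} = p \<union> (q - {x})" if "p \<subseteq> range Yv" for p q
      using that by auto
    moreover have "q - {x} \<subseteq> range Zv" if "q \<subseteq> range Zv" for q using that by blast
    ultimately show ?thesis unfolding split_rank_le_def using L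
      by (intro exI[of _ "map (\<lambda>(u, w). (u, \<lambda>q. if x \<in> q then c * w q + w (q - {x}) else 0)) L"])
         (auto simp: split_def o_def sum_list_const_mult sum_list_addf algebra_simps)
  qed
qed

lemma sum_list_product_mult:
  fixes f :: "'b \<Rightarrow> 'a::semiring_0" and g :: "'c \<Rightarrow> 'a"
  shows "(\<Sum>(a, b)\<leftarrow>List.product xs ys. f a * g b) = (\<Sum>a\<leftarrow>xs. f a) * (\<Sum>b\<leftarrow>ys. g b)"
  by (induction xs) (simp_all add: o_def sum_list_const_mult distrib_right)

lemma split_rank_le_disjoint_mult:
  assumes "split_rank_le F1 B1" "split_rank_le F2 B2"
  shows "split_rank_le (\<lambda>T. if T \<subseteq> X1 \<union> X2 then F1 (T \<inter> X1) * F2 (T \<inter> X2) else 0) (B1 * B2)"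
proof -
  obtain L1 where L1: "real (length L1) \<le> B1"
    "\<And>p q. p \<subseteq> range Yv \<Longrightarrow> q \<subseteq> range Zv \<Longrightarrow> F1 (p \<union> q) = (\<Sum>(u, w)\<leftarrow>L1. u p * w q)"
    using assms(1) unfolding split_rank_le_def by blast
  obtain L2 where L2: "real (length L2) \<le> B2"
    "\<And>p q. p \<subseteq> range Yv \<Longrightarrow> q \<subseteq> range Zv \<Longrightarrow> F2 (p \<union> q) = (\<Sum>(u, w)\<leftarrow>L2. u p * w q)"
    using assms(2) unfolding split_rank_le_def by blast
  define restr where
    "restr f1 f2 A = (if A \<subseteq> X1 \<union> X2 then f1 (A \<inter> X1) * f2 (A \<inter> X2) else 0)" for f1 f2 :: "var set \<Rightarrow> 'a" and A
  define L where
    "L = map (\<lambda>((u1, w1), (u2, w2)). (restr u1 u2, restr w1 w2)) (List.product L1 L2)"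
  have "real (length L) \<le> B1 * B2"
    using L1(1) L2(1) by (simp add: L_def length_product mult_mono)
  moreover have "(if p \<union> q \<subseteq> X1 \<union> X2 then F1 ((p \<union> q) \<inter> X1) * F2 ((p \<union> q) \<inter> X2) else 0)
      = (\<Sum>(u, w)\<leftarrow>L. u p * w q)" if "p \<subseteq> range Yv" "q \<subseteq> range Zv" for p q
  proof (cases "p \<union> q \<subseteq> X1 \<union> X2")
    case True
    define f1 :: "(var set \<Rightarrow> 'a) \<times> (var set \<Rightarrow> 'a) \<Rightarrow> 'a"
      where "f1 = (\<lambda>(u, w). u (p \<inter> X1) * w (q \<inter> X1))"
    define f2 :: "(var set \<Rightarrow> 'a) \<times> (var set \<Rightarrow> 'a) \<Rightarrow> 'a"
      where "f2 = (\<lambda>(u, w). u (p \<inter> X2) * w (q \<inter> X2))"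
    have "(\<Sum>(u, w)\<leftarrow>L. u p * w q) = (\<Sum>(a, b)\<leftarrow>List.product L1 L2. f1 a * f2 b)"
      using True by (simp add: L_def restr_def f1_def f2_def o_def split_def algebra_simps)
    also have "\<dots> = F1 ((p \<union> q) \<inter> X1) * F2 ((p \<union> q) \<inter> X2)"
    proof -
      have sub: "p \<inter> X \<subseteq> range Yv" "q \<inter> X \<subseteq> range Zv" for X using that by auto
      show ?thesis using L1(2)[OF sub] L2(2)[OF sub]
        by (simp add: sum_list_product_mult f1_def f2_def Int_Un_distrib2)
    qed
    finally show ?thesis using True by simp
  next
    case False
    then have "\<not> p \<subseteq> X1 \<union> X2 \<or> \<not> q \<subseteq> X1 \<union> X2" by blast
    then show ?thesis using False by (elim disjE) (simp_all add: L_def restr_def o_def split_def)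
  qed
  ultimately show ?thesis unfolding split_rank_le_def by blast
qed

lemma split_rank_le_Y_subsets:
  assumes "\<And>T. \<not> T \<subseteq> V \<Longrightarrow> F T = 0" "V \<inter> range Yv \<subseteq> A" "finite A"
  shows "split_rank_le F (2 ^ card A)"
proof -
  obtain Ps where Ps: "set Ps = Pow A" "distinct Ps"
    using finite_distinct_list[of "Pow A"] assms(3) by blast
  have "F (p \<union> q) = (\<Sum>P\<leftarrow>Ps. (if p = P then 1 else 0) * F (P \<union> q))" if "p \<subseteq> range Yv" for p q
  proof -
    have "(\<Sum>P\<leftarrow>Ps. (if p = P then 1 else 0) * F (P \<union> q)) = (\<Sum>P\<in>Pow A. if P = p then F (p \<union> q) else 0)"
      using Ps by (auto simp: sum_list_distinct_conv_sum_set intro!: sum.cong)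
    moreover have "\<not> p \<subseteq> A \<Longrightarrow> F (p \<union> q) = 0" using that assms(1,2) by blast
    ultimately show ?thesis by (cases "p \<subseteq> A") (simp_all add: sum.delta assms(3))
  qed
  then show ?thesis unfolding split_rank_le_def using Ps assms(3)
    by (intro exI[of _ "map (\<lambda>P. (\<lambda>p. if p = P then 1 else 0, \<lambda>q. F (P \<union> q))) Ps"])
       (simp add: o_def distinct_card[symmetric] card_Pow)
qed

lemma split_rank_le_Z_subsets:
  assumes "\<And>T. \<not> T \<subseteq> V \<Longrightarrow> F T = 0" "V \<inter> range Zv \<subseteq> A" "finite A"
  shows "split_rank_le F (2 ^ card A)"
proof -
  obtain Ps where Ps: "set Ps = Pow A" "distinct Ps"
    using finite_distinct_list[of "Pow A"] assms(3) by blast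
  have "F (p \<union> q) = (\<Sum>P\<leftarrow>Ps. F (p \<union> P) * (if q = P then 1 else 0))" if "q \<subseteq> range Zv" for p q
  proof -
    have "(\<Sum>P\<leftarrow>Ps. F (p \<union> P) * (if q = P then 1 else 0)) = (\<Sum>P\<in>Pow A. if P = q then F (p \<union> q) else 0)"
      using Ps by (auto simp: sum_list_distinct_conv_sum_set intro!: sum.cong)
    moreover have "\<not> q \<subseteq> A \<Longrightarrow> F (p \<union> q) = 0" using that assms(1,2) by blast
    ultimately show ?thesis by (cases "q \<subseteq> A") (simp_all add: sum.delta assms(3))
  qed
  then show ?thesis unfolding split_rank_le_def using Ps assms(3)
    by (intro exI[of _ "map (\<lambda>P. (\<lambda>p. F (p \<union> P), \<lambda>q. if q = P then 1 else 0)) Ps"])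
       (simp add: o_def distinct_card[symmetric] card_Pow)
qed

lemma split_rank_le_Mval_pvar_mult:
  assumes "split_rank_le (Mval S g) B"
  shows "split_rank_le (Mval S (pvar x * g)) B"
proof -
  have "Mval S (pvar x * g) = (\<lambda>T. if x \<in> T then S x * Mval S g T + Mval S g (T - {x}) else 0)"
    by (simp add: fun_eq_iff Mval_pvar_mult)
  with split_rank_le_insert_var[OF assms] show ?thesis by simp
qed

lemma split_rank_le_Mval_monomial_mult:
  assumes "split_rank_le (Mval S g) B"
  shows "split_rank_le (Mval S (Poly_Mapping.single \<mu> 1 * g)) B"
proof -
  have power: "split_rank_le (Mval S (Poly_Mapping.single (Poly_Mapping.single x n) 1 * h)) B"
    if "split_rank_le (Mval S h) B" for x n and h :: "'a mpoly"
  proof (induction n)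
    case 0
    then show ?case using that by simp
  next
    case (Suc n)
    have "Poly_Mapping.single (Poly_Mapping.single x (Suc n)) (1::'a)
        = pvar x * Poly_Mapping.single (Poly_Mapping.single x n) 1"
      by (simp add: pvar_def mult_single flip: single_add)
    then show ?case using split_rank_le_Mval_pvar_mult[OF Suc] by (simp add: mult.assoc)
  qed
  have "split_rank_le (Mval S (Poly_Mapping.single (\<Sum>x\<in>K. Poly_Mapping.single x (e x)) 1 * g)) B"
    if "finite K" for K e
    using that
  proof (induction K rule: finite_induct)
    case empty
    then show ?case using assms by simp
  next
    case (insert x K)
    then have "Poly_Mapping.single (\<Sum>y\<in>insert x K. Poly_Mapping.single y (e y)) (1::'a) * g
        = Poly_Mapping.single (Poly_Mapping.single x (e x)) 1
          * (Poly_Mapping.single (\<Sum>y\<in>K. Poly_Mapping.single y (e y)) 1 * g)"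
      by (simp add: mult_single mult.assoc[symmetric])
    then show ?case using power[OF insert.IH] by simp
  qed
  from this[of "Poly_Mapping.keys \<mu>" "Poly_Mapping.lookup \<mu>"] show ?thesis
    by (simp flip: poly_mapping_sum_singles)
qed

lemma split_rank_le_Mval_mult_sparse:
  assumes "split_rank_le (Mval S g) B"
  shows "split_rank_le (Mval S (h * g)) (real (card (Poly_Mapping.keys h)) * B)"
proof -
  have "split_rank_le (\<lambda>T. \<Sum>\<mu>\<in>Poly_Mapping.keys h.
      Poly_Mapping.lookup h \<mu> * Mval S (Poly_Mapping.single \<mu> 1 * g) T) (real (card (Poly_Mapping.keys h)) * B)"
    by (rule split_rank_le_sum) (simp_all add: split_rank_le_Mval_monomial_mult[OF assms])
  moreover have "Mval S (h * g) = (\<lambda>T. \<Sum>\<mu>\<in>Poly_Mapping.keys h.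
      Poly_Mapping.lookup h \<mu> * Mval S (Poly_Mapping.single \<mu> 1 * g) T)"
    by (rule ext) (rule Mval_mult_eq_sum_monomials)
  ultimately show ?thesis by simp
qed

lemma split_rank_le_Mval_mult_disjoint:
  assumes "split_rank_le (Mval S g) B1" "split_rank_le (Mval S h) B2"
    "\<forall>\<mu>\<in>Poly_Mapping.keys g. Poly_Mapping.keys \<mu> \<subseteq> X1"
    "\<forall>\<mu>\<in>Poly_Mapping.keys h. Poly_Mapping.keys \<mu> \<subseteq> X2" "X1 \<inter> X2 = {}"
  shows "split_rank_le (Mval S (g * h)) (B1 * B2)"
proof -
  have "Mval S (g * h) = (\<lambda>T. if T \<subseteq> X1 \<union> X2 then Mval S g (T \<inter> X1) * Mval S h (T \<inter> X2) else 0)"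
    by (rule ext) (rule Mval_mult_disjoint[OF assms(3-5)])
  with split_rank_le_disjoint_mult[OF assms(1,2), of X1 X2] show ?thesis by simp
qed

section \<open>Rank of the evaluated matrix\<close>

lemma lookup_mlmono: "finite T \<Longrightarrow> Poly_Mapping.lookup (mlmono T) x = (if x \<in> T then 1 else 0)"
  by (simp add: mlmono_def lookup_sum lookup_single when_def)

lemma keys_mlmono: "finite T \<Longrightarrow> Poly_Mapping.keys (mlmono T) = T"
  by (auto simp: in_keys_iff lookup_mlmono split: if_splits)

lemma lookup_single_one_mult:
  "Poly_Mapping.lookup (Poly_Mapping.single k 1 * G) (k + \<nu>) = Poly_Mapping.lookup (G :: 'a::comm_semiring_1 mpoly) \<nu>"
proof -
  have "Poly_Mapping.single k 1 * G = (\<Sum>\<nu>\<in>Poly_Mapping.keys G. Poly_Mapping.single (k + \<nu>) (Poly_Mapping.lookup G \<nu>))"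
    by (subst poly_mapping_sum_singles[of G]) (simp add: sum_distrib_left mult_single)
  then show ?thesis
    by (simp add: lookup_sum lookup_single when_def in_keys_iff sum.delta' cong: if_cong)
qed

lemma monomial_eq_mlmono_add:
  assumes "finite T" "Poly_Mapping.keys \<mu> = T"
  shows "\<mu> = mlmono T + (\<mu> - mlmono T)" "Poly_Mapping.keys (\<mu> - mlmono T) \<subseteq> T"
proof -
  show "\<mu> = mlmono T + (\<mu> - mlmono T)"
  proof (rule poly_mapping_eqI)
    fix x
    show "Poly_Mapping.lookup \<mu> x = Poly_Mapping.lookup (mlmono T + (\<mu> - mlmono T)) x"
    proof (cases "x \<in> T")
      case True
      then have "Poly_Mapping.lookup \<mu> x \<noteq> 0" using assms(2) by (metis in_keys_iff)
      then show ?thesis using True assms(1) by (simp add: lookup_add lookup_minus lookup_mlmono)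
    next
      case False
      then show ?thesis using assms(1) by (simp add: lookup_add lookup_minus lookup_mlmono)
    qed
  qed
  show "Poly_Mapping.keys (\<mu> - mlmono T) \<subseteq> T"
    using assms by (auto simp: in_keys_iff lookup_minus)
qed

lemma lookup_mlmono_quotient:
  fixes g G Q :: "'a::comm_semiring_1 mpoly"
  assumes fin: "finite T" and supp: "\<forall>\<mu>\<in>Poly_Mapping.keys G. Poly_Mapping.keys \<mu> \<subseteq> T"
    and g: "g = Poly_Mapping.single (mlmono T) 1 * G + Q"
    and Q: "\<forall>\<mu>\<in>Poly_Mapping.keys Q. \<not> ((\<exists>\<nu>. \<mu> = mlmono T + \<nu>) \<and> Poly_Mapping.keys \<mu> \<subseteq> T)"
  shows "Poly_Mapping.lookup G \<nu> =
    (if Poly_Mapping.keys \<nu> \<subseteq> T then Poly_Mapping.lookup g (mlmono T + \<nu>) else 0)"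
proof (cases "Poly_Mapping.keys \<nu> \<subseteq> T")
  case True
  then have "Poly_Mapping.keys (mlmono T + \<nu>) \<subseteq> T"
    by (simp add: keys_add_monomials keys_mlmono[OF fin])
  then have "Poly_Mapping.lookup Q (mlmono T + \<nu>) = 0" using Q by (auto simp: in_keys_iff)
  then show ?thesis using True by (simp add: g lookup_add lookup_single_one_mult)
next
  case False
  then show ?thesis using supp by (auto simp: in_keys_iff)
qed

lemma Mentry_eqI:
  fixes g G :: "'a::comm_ring_1 mpoly"
  assumes fin: "finite (p \<union> q)"
    and G: "\<And>\<nu>. Poly_Mapping.lookup G \<nu> =
        (if Poly_Mapping.keys \<nu> \<subseteq> p \<union> q then Poly_Mapping.lookup g (mlmono (p \<union> q) + \<nu>) else 0)"
  shows "Mentry g p q = G"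
  unfolding Mentry_def
proof (rule the_equality)
  let ?T = "p \<union> q" and ?M = "mlmono (p \<union> q)"
  have keys_M: "Poly_Mapping.keys (?M + \<nu>) \<subseteq> ?T \<longleftrightarrow> Poly_Mapping.keys \<nu> \<subseteq> ?T" for \<nu>
    by (simp add: keys_add_monomials keys_mlmono[OF fin])
  show "(\<forall>\<mu>\<in>Poly_Mapping.keys G. Poly_Mapping.keys \<mu> \<subseteq> ?T) \<and>
    (\<exists>Q. g = Poly_Mapping.single ?M 1 * G + Q \<and>
      (\<forall>\<mu>\<in>Poly_Mapping.keys Q. \<not> ((\<exists>\<nu>. \<mu> = ?M + \<nu>) \<and> Poly_Mapping.keys \<mu> \<subseteq> ?T)))"
  proof (intro conjI exI)
    show "\<forall>\<mu>\<in>Poly_Mapping.keys G. Poly_Mapping.keys \<mu> \<subseteq> ?T"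
      using G by (metis in_keys_iff)
    show "g = Poly_Mapping.single ?M 1 * G + (g - Poly_Mapping.single ?M 1 * G)" by simp
    show "\<forall>\<mu>\<in>Poly_Mapping.keys (g - Poly_Mapping.single ?M 1 * G).
        \<not> ((\<exists>\<nu>. \<mu> = ?M + \<nu>) \<and> Poly_Mapping.keys \<mu> \<subseteq> ?T)"
      by (auto simp: in_keys_iff lookup_minus lookup_single_one_mult G keys_M)
  qed
next
  fix G'
  assume "(\<forall>\<mu>\<in>Poly_Mapping.keys G'. Poly_Mapping.keys \<mu> \<subseteq> p \<union> q) \<and>
    (\<exists>Q. g = Poly_Mapping.single (mlmono (p \<union> q)) 1 * G' + Q \<and>
      (\<forall>\<mu>\<in>Poly_Mapping.keys Q. \<not> ((\<exists>\<nu>. \<mu> = mlmono (p \<union> q) + \<nu>) \<and> Poly_Mapping.keys \<mu> \<subseteq> p \<union> q)))"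
  then show "G' = G"
    by (auto intro!: poly_mapping_eqI simp: G lookup_mlmono_quotient[OF fin])
qed

lemma lookup_Mentry:
  fixes g :: "'a::comm_ring_1 mpoly"
  assumes "finite (p \<union> q)"
  shows "Poly_Mapping.lookup (Mentry g p q) \<nu> =
    (if Poly_Mapping.keys \<nu> \<subseteq> p \<union> q then Poly_Mapping.lookup g (mlmono (p \<union> q) + \<nu>) else 0)"
proof -
  define f where "f \<nu> = (if Poly_Mapping.keys \<nu> \<subseteq> p \<union> q then Poly_Mapping.lookup g (mlmono (p \<union> q) + \<nu>) else 0)"
    for \<nu>
  have "{\<nu>. f \<nu> \<noteq> 0} \<subseteq> (\<lambda>\<nu>. mlmono (p \<union> q) + \<nu>) -` Poly_Mapping.keys g"
    by (auto simp: f_def in_keys_iff)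
  moreover have "finite ((\<lambda>\<nu>. mlmono (p \<union> q) + \<nu>) -` Poly_Mapping.keys g)"
    by (rule finite_vimageI) (auto simp: inj_def)
  ultimately have "Poly_Mapping.lookup (Abs_poly_mapping f) = f"
    by (simp add: finite_subset)
  then have "Mentry g p q = Abs_poly_mapping f"
    by (intro Mentry_eqI[OF assms]) (simp add: f_def)
  then show ?thesis by (simp add: \<open>Poly_Mapping.lookup (Abs_poly_mapping f) = f\<close> f_def)
qed

lemma peval_Mentry:
  fixes g :: "'a::comm_ring_1 mpoly"
  assumes fin: "finite (p \<union> q)"
  shows "peval S (Mentry g p q) = Mval S g (p \<union> q)"
proof -
  let ?T = "p \<union> q" and ?M = "mlmono (p \<union> q)" and ?G = "Mentry g p q"
  have keys_G: "Poly_Mapping.keys ?G = {\<nu>. Poly_Mapping.keys \<nu> \<subseteq> ?T \<and> ?M + \<nu> \<in> Poly_Mapping.keys g}"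
    unfolding set_eq_iff by (simp add: in_keys_iff lookup_Mentry[OF fin])
  have shift: "(\<lambda>\<nu>. ?M + \<nu>) ` Poly_Mapping.keys ?G = {\<mu> \<in> Poly_Mapping.keys g. Poly_Mapping.keys \<mu> = ?T}"
  proof (intro equalityI subsetI)
    fix \<mu> assume "\<mu> \<in> {\<mu> \<in> Poly_Mapping.keys g. Poly_Mapping.keys \<mu> = ?T}"
    with monomial_eq_mlmono_add[OF fin] show "\<mu> \<in> (\<lambda>\<nu>. ?M + \<nu>) ` Poly_Mapping.keys ?G"
      by (auto simp: keys_G intro!: image_eqI[of _ _ "\<mu> - ?M"])
  qed (auto simp: keys_G keys_add_monomials keys_mlmono[OF fin])
  have "peval S ?G = (\<Sum>\<nu>\<in>Poly_Mapping.keys ?G. Poly_Mapping.lookup g (?M + \<nu>) *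
        (\<Prod>x\<in>?T. S x ^ (Poly_Mapping.lookup (?M + \<nu>) x - 1)))"
    unfolding peval_def
  proof (rule sum.cong[OF refl])
    fix \<nu> assume "\<nu> \<in> Poly_Mapping.keys ?G"
    then have \<nu>: "Poly_Mapping.keys \<nu> \<subseteq> ?T" by (simp add: keys_G)
    have "(\<Prod>x\<in>Poly_Mapping.keys \<nu>. S x ^ Poly_Mapping.lookup \<nu> x) = (\<Prod>x\<in>?T. S x ^ Poly_Mapping.lookup \<nu> x)"
      by (rule prod.mono_neutral_left) (use fin \<nu> in \<open>auto simp: in_keys_iff\<close>)
    also have "\<dots> = (\<Prod>x\<in>?T. S x ^ (Poly_Mapping.lookup (?M + \<nu>) x - 1))"
      by (rule prod.cong) (use fin in \<open>auto simp: lookup_add lookup_mlmono\<close>)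
    finally show "Poly_Mapping.lookup ?G \<nu> * (\<Prod>x\<in>Poly_Mapping.keys \<nu>. S x ^ Poly_Mapping.lookup \<nu> x) =
        Poly_Mapping.lookup g (?M + \<nu>) * (\<Prod>x\<in>?T. S x ^ (Poly_Mapping.lookup (?M + \<nu>) x - 1))"
      using \<nu> by (simp add: lookup_Mentry[OF fin])
  qed
  also have "\<dots> = (\<Sum>\<mu>\<in>{\<mu> \<in> Poly_Mapping.keys g. Poly_Mapping.keys \<mu> = ?T}.
        Poly_Mapping.lookup g \<mu> * (\<Prod>x\<in>?T. S x ^ (Poly_Mapping.lookup \<mu> x - 1)))"
    by (simp add: shift[symmetric] sum.reindex inj_on_def)
  also have "\<dots> = Mval S g ?T"
    unfolding Mval_def mono_weight_def by (rule sum.mono_neutral_cong_left) auto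
  finally show ?thesis .
qed

lemma rank_sum_of_products_le:
  fixes u w :: "nat \<Rightarrow> nat \<Rightarrow> 'a::field"
  assumes "finite I"
  shows "vec_space.rank n (mat n nc (\<lambda>(i, j). \<Sum>t\<in>I. u t i * w t j)) \<le> card I"
  using assms
proof (induction I rule: finite_induct)
  case empty
  have "mat n nc (\<lambda>(i, j). \<Sum>t\<in>{}. u t i * w t j) = (0\<^sub>m n nc :: 'a mat)"
    by (rule eq_matI) auto
  then show ?case by (metis vec_space.rank_0I order_refl card.empty)
next
  case (insert a F)
  have split: "mat n nc (\<lambda>(i, j). \<Sum>t\<in>insert a F. u t i * w t j)
      = mat n nc (\<lambda>(i, j). u a i * w a j) + mat n nc (\<lambda>(i, j). \<Sum>t\<in>F. u t i * w t j)"
    by (rule eq_matI) (use insert in auto)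
  have "vec_space.rank n (mat n nc (\<lambda>(i, j). u a i * w a j)) \<le> 1"
    by (rule vec_space.rank_le_1_product_entries[where f = "u a" and g = "w a"]) auto
  moreover have "vec_space.rank n (mat n nc (\<lambda>(i, j). \<Sum>t\<in>insert a F. u t i * w t j))
     \<le> vec_space.rank n (mat n nc (\<lambda>(i, j). u a i * w a j))
       + vec_space.rank n (mat n nc (\<lambda>(i, j). \<Sum>t\<in>F. u t i * w t j))"
    unfolding split by (rule vec_space.rank_subadditive) auto
  ultimately show ?case using insert by simp
qed

lemma finite_Ysub: "finite (Ysub m i)"
  by (rule finite_subset[of _ "(\<lambda>j. Yv (Suc j)) ` {..<m}"]) (auto simp: Ysub_def)

lemma finite_Zsub: "finite (Zsub m i)"
  by (rule finite_subset[of _ "(\<lambda>j. Zv (Suc j)) ` {..<m}"]) (auto simp: Zsub_def)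

lemma rank_Mmat_eval_le:
  fixes g :: "'a::field mpoly"
  assumes "split_rank_le (Mval S g) B"
  shows "real (vec_space.rank (2 ^ m) (Mmat_eval m g S)) \<le> B"
proof -
  obtain L where L: "real (length L) \<le> B"
    "\<And>p q. p \<subseteq> range Yv \<Longrightarrow> q \<subseteq> range Zv \<Longrightarrow> Mval S g (p \<union> q) = (\<Sum>(u, w)\<leftarrow>L. u p * w q)"
    using assms unfolding split_rank_le_def by blast
  have "Ysub m i \<subseteq> range Yv" "Zsub m j \<subseteq> range Zv" for i j
    by (auto simp: Ysub_def Zsub_def)
  then have "Mmat_eval m g S = mat (2 ^ m) (2 ^ m)
      (\<lambda>(i, j). \<Sum>t\<in>{..<length L}. fst (L ! t) (Ysub m i) * snd (L ! t) (Zsub m j))"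
    unfolding Mmat_eval_def
    by (intro eq_matI) (simp_all add: peval_Mentry finite_Ysub finite_Zsub L(2) sum_list_sum_nth
        atLeast0LessThan split_def)
  then have "vec_space.rank (2 ^ m) (Mmat_eval m g S) \<le> length L"
    using rank_sum_of_products_le[of "{..<length L}"] by simp
  with L(1) show ?thesis by linarith
qed

lemma maxrank_le:
  fixes g :: "'a::field mpoly"
  assumes "\<And>S. split_rank_le (Mval S g) B"
  shows "real (maxrank m g) \<le> B"
proof -
  let ?R = "range (\<lambda>S. vec_space.rank (2 ^ m) (Mmat_eval m g S))"
  have le: "real r \<le> B" if "r \<in> ?R" for r
    using that rank_Mmat_eval_le[OF assms] by auto
  then have "?R \<subseteq> {..nat \<lfloor>B\<rfloor>}" by (auto simp: le_nat_floor)
  then have "finite ?R" by (rule finite_subset) simp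
  then have "maxrank m g \<in> ?R" unfolding maxrank_def by (rule Max_in) simp
  then show ?thesis by (rule le)
qed

section \<open>Formulas, central paths and depth\<close>

lemma keys_fpoly_subset_fvars:
  "\<mu> \<in> Poly_Mapping.keys (fpoly f) \<Longrightarrow> Poly_Mapping.keys \<mu> \<subseteq> fvars (f :: 'a::comm_semiring_1 formula)"
proof (induction f arbitrary: \<mu>)
  case (Var x)
  then show ?case by (simp add: keys_pvar)
next
  case (Cst c)
  then show ?case by (simp add: pconst_def split: if_splits)
next
  case (Plus f1 f2)
  then show ?case using keys_add[of "fpoly f1" "fpoly f2"] by auto
next
  case (Prod f1 f2)
  then obtain \<mu>1 \<mu>2 where "\<mu> = \<mu>1 + \<mu>2"
    "\<mu>1 \<in> Poly_Mapping.keys (fpoly f1)" "\<mu>2 \<in> Poly_Mapping.keys (fpoly f2)"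
    using keys_mult[of "fpoly f1" "fpoly f2"] by auto
  then show ?case using Prod.IH by (auto simp: keys_add_monomials)
qed

lemma split_rank_le_fpoly_trivial:
  fixes f :: "'a::comm_semiring_1 formula"
  assumes "fvars f \<subseteq> Yset m \<union> Zset m"
  shows "split_rank_le (Mval S (fpoly f)) (2 powr aY m f)"
proof -
  have vanish: "Mval S (fpoly f) T = 0" if "\<not> T \<subseteq> fvars f" for T
    by (rule Mval_eq_0_outside[where V = "fvars f"]) (use that keys_fpoly_subset_fvars in blast)+
  have "split_rank_le (Mval S (fpoly f)) (2 ^ card (fvars f \<inter> Yset m))"
    by (rule split_rank_le_Y_subsets[OF vanish]) (use assms in \<open>auto simp: Yset_def Zset_def\<close>)
  moreover have "split_rank_le (Mval S (fpoly f)) (2 ^ card (fvars f \<inter> Zset m))"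
    by (rule split_rank_le_Z_subsets[OF vanish]) (use assms in \<open>auto simp: Yset_def Zset_def\<close>)
  ultimately show ?thesis by (simp add: aY_def min_def powr_realpow)
qed

lemma fvars_subf: "fvars (subf f p) \<subseteq> fvars f"
  by (induction f p rule: subf.induct) auto

lemma subf_append:
  "v \<in> positions f \<Longrightarrow> p \<in> positions (subf f v) \<Longrightarrow> v @ p \<in> positions f \<and> subf f (v @ p) = subf (subf f v) p"
proof (induction f arbitrary: v)
  case (Plus f1 f2)
  then show ?case by (cases v) auto
next
  case (Prod f1 f2)
  then show ?case by (cases v) auto
qed auto

definition is_child :: "'a formula \<Rightarrow> bool \<Rightarrow> 'a formula \<Rightarrow> bool" where
  "is_child f b c \<longleftrightarrow> (\<forall>q. subf f (b # q) = subf c q) \<and> Cons b ` leafpos c \<subseteq> leafpos f"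

lemma is_child_Plus: "is_child (Plus f1 f2) False f1" "is_child (Plus f1 f2) True f2"
  by (auto simp: is_child_def leafpos_def)

lemma is_child_Prod: "is_child (Prod f1 f2) False f1" "is_child (Prod f1 f2) True f2"
  by (auto simp: is_child_def leafpos_def)

lemma leafpos_Var: "leafpos (Var x) = {[]}"
  by (auto simp: leafpos_def)

lemma leafpos_Cst: "leafpos (Cst c) = {[]}"
  by (auto simp: leafpos_def)

lemma finite_leafpos: "finite (leafpos f)"
proof -
  have "finite (positions f)" by (induction f) auto
  then show ?thesis by (simp add: leafpos_def)
qed

lemma leafpos_nonempty: "leafpos f \<noteq> {}"
proof (induction f)
  case (Plus f1 f2)
  then show ?case using is_child_Plus(1) by (auto simp: is_child_def)
next
  case (Prod f1 f2)
  then show ?case using is_child_Prod(1) by (auto simp: is_child_def)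
qed (simp_all add: leafpos_Var leafpos_Cst)

lemma finite_Yset: "finite (Yset m)"
  by (simp add: Yset_def)

lemma finite_Zset: "finite (Zset m)"
  by (simp add: Zset_def)

lemma bY_mono:
  assumes "fvars f \<subseteq> fvars g"
  shows "bY m f \<le> bY m g"
proof -
  have "card (fvars f \<inter> Yset m) \<le> card (fvars g \<inter> Yset m)" "card (fvars f \<inter> Zset m) \<le> card (fvars g \<inter> Zset m)"
    using assms by (auto intro!: card_mono simp: finite_Yset finite_Zset)
  then show ?thesis by (simp add: bY_def)
qed

lemma aY_le_bY: "aY m f \<le> bY m f"
  by (simp add: aY_def bY_def)

lemma bY_union_le:
  assumes "fvars f = fvars f1 \<union> fvars f2"
  shows "bY m f \<le> bY m f1 + bY m f2"
proof -
  have "card (fvars f \<inter> Yset m) \<le> card (fvars f1 \<inter> Yset m) + card (fvars f2 \<inter> Yset m)"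
    "card (fvars f \<inter> Zset m) \<le> card (fvars f1 \<inter> Zset m) + card (fvars f2 \<inter> Zset m)"
    unfolding assms Int_Un_distrib2 by (rule card_Un_le)+
  then have "real (card (fvars f \<inter> Yset m)) \<le> real (card (fvars f1 \<inter> Yset m)) + real (card (fvars f2 \<inter> Yset m))"
    "real (card (fvars f \<inter> Zset m)) \<le> real (card (fvars f1 \<inter> Zset m)) + real (card (fvars f2 \<inter> Zset m))"
    by (metis of_nat_add of_nat_le_iff)+
  then show ?thesis
    unfolding bY_def add_divide_distrib[symmetric] by (intro divide_right_mono) linarith+
qed

lemma bY_union_disjoint:
  assumes "fvars f = fvars f1 \<union> fvars f2" "fvars f1 \<inter> fvars f2 = {}"
  shows "bY m f = bY m f1 + bY m f2"
proof -
  have "card (fvars f \<inter> Yset m) = card (fvars f1 \<inter> Yset m) + card (fvars f2 \<inter> Yset m)"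
    "card (fvars f \<inter> Zset m) = card (fvars f1 \<inter> Zset m) + card (fvars f2 \<inter> Zset m)"
    unfolding assms Int_Un_distrib2
    by (rule card_Un_disjoint; use assms(2) finite_Yset finite_Zset in auto)+
  then show ?thesis by (simp add: bY_def add_divide_distrib)
qed

lemma path_central_Cons:
  assumes "is_child f b c"
  shows "path_central m f (b # q) \<longleftrightarrow> bY m f \<le> 2 * bY m c \<and> path_central m c q"
proof -
  have sub: "subf f (b # p) = subf c p" for p using assms by (simp add: is_child_def)
  show ?thesis
    unfolding path_central_def using sub[of "[]"] by (auto simp: less_Suc_eq_0_disj sub)
qed

lemma path_unbalanced_Cons:
  assumes "is_child f b c"
  shows "path_unbalanced m k f (b # q) \<longleftrightarrow> unbalanced m k f \<or> path_unbalanced m k c q"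
proof -
  have sub: "subf f (b # p) = subf c p" for p using assms by (simp add: is_child_def)
  show ?thesis
    unfolding path_unbalanced_def less_Suc_eq_le[symmetric] Ex_less_Suc2 by (simp add: sub Ex_less_Suc2)
qed

lemma weak_child:
  assumes "weak m k f" "\<not> unbalanced m k f" "is_child f b c" "bY m f \<le> 2 * bY m c"
  shows "weak m k c"
  unfolding weak_def
proof (intro ballI impI)
  fix q assume q: "q \<in> leafpos c" "path_central m c q"
  then have "b # q \<in> leafpos f" using assms(3) by (auto simp: is_child_def)
  moreover have "path_central m f (b # q)" using q assms(4) path_central_Cons[OF assms(3)] by simp
  ultimately have "path_unbalanced m k f (b # q)" using assms(1) by (simp add: weak_def)
  then show "path_unbalanced m k c q" using path_unbalanced_Cons[OF assms(3)] assms(2) by simp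
qed

lemma weak_leaf: "weak m k (f :: 'a formula) \<Longrightarrow> leafpos f = {[]} \<Longrightarrow> unbalanced m k f"
  by (simp add: weak_def path_central_def path_unbalanced_def)

lemma ex_central_path_gate:
  assumes "is_child f False f1" "is_child f True f2" "fvars f = fvars f1 \<union> fvars f2"
    "\<exists>q\<in>leafpos f1. path_central m f1 q" "\<exists>q\<in>leafpos f2. path_central m f2 q"
  shows "\<exists>q\<in>leafpos f. path_central m f q"
proof -
  have "bY m f \<le> bY m f1 + bY m f2" by (rule bY_union_le[OF assms(3)])
  then consider "bY m f \<le> 2 * bY m f1" | "bY m f \<le> 2 * bY m f2" by linarith
  then show ?thesis
  proof cases
    case 1
    obtain q where "q \<in> leafpos f1" "path_central m f1 q" using assms(4) by blast
    with 1 assms(1) show ?thesis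
      by (intro bexI[of _ "False # q"]) (auto simp: path_central_Cons[OF assms(1)] is_child_def)
  next
    case 2
    obtain q where "q \<in> leafpos f2" "path_central m f2 q" using assms(5) by blast
    with 2 assms(2) show ?thesis
      by (intro bexI[of _ "True # q"]) (auto simp: path_central_Cons[OF assms(2)] is_child_def)
  qed
qed

lemma ex_central_path: "\<exists>q\<in>leafpos f. path_central m f q"
proof (induction f)
  case (Plus f1 f2)
  then show ?case by (intro ex_central_path_gate[OF is_child_Plus]) simp_all
next
  case (Prod f1 f2)
  then show ?case by (intro ex_central_path_gate[OF is_child_Prod]) simp_all
qed (simp_all add: leafpos_Var leafpos_Cst path_central_def)

lemma weak_imp_le_bY:
  assumes "weak m k f"
  shows "k \<le> bY m f"
proof -
  obtain q where "q \<in> leafpos f" "path_central m f q" using ex_central_path by blast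
  then obtain i where "unbalanced m k (subf f (take i q))"
    using assms by (auto simp: weak_def path_unbalanced_def)
  moreover have "bY m (subf f (take i q)) \<le> bY m f" by (rule bY_mono[OF fvars_subf])
  moreover have "0 \<le> aY m (subf f (take i q))" by (simp add: aY_def)
  ultimately show ?thesis by (simp add: unbalanced_def)
qed

definition nondisjoint_count :: "'a formula \<Rightarrow> bool list \<Rightarrow> nat" where
  "nondisjoint_count f q = card {i. i \<le> length q \<and> nondisjoint_prod (subf f (take i q))}"

lemma nondisjoint_count_Cons:
  assumes "is_child f b c"
  shows "nondisjoint_count f (b # q) = (if nondisjoint_prod f then 1 else 0) + nondisjoint_count c q"
proof -
  have sub: "subf f (b # p) = subf c p" for p using assms by (simp add: is_child_def)
  let ?P = "\<lambda>i. nondisjoint_prod (subf f (take i (b # q)))"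
  have "{i. i \<le> length (b # q) \<and> ?P i}
      = (if ?P 0 then {0} else {}) \<union> Suc ` {j. j \<le> length q \<and> nondisjoint_prod (subf c (take j q))}"
    by (auto simp: sub image_iff less_Suc_eq_le[symmetric] less_Suc_eq_0_disj)
  then show ?thesis unfolding nondisjoint_count_def
    by (simp add: card_image card_insert_if)
qed

lemma ps_depth_child:
  assumes "is_child f b c"
  shows "ps_depth c + (if nondisjoint_prod f then 1 else 0) \<le> ps_depth f"
proof -
  have depth: "ps_depth g = Max (nondisjoint_count g ` leafpos g)" for g :: "'a formula"
    by (simp add: ps_depth_def nondisjoint_count_def)
  have "ps_depth c \<in> nondisjoint_count c ` leafpos c"
    unfolding depth by (rule Max_in) (simp_all add: finite_leafpos leafpos_nonempty)
  then obtain q where q: "q \<in> leafpos c" "ps_depth c = nondisjoint_count c q" by blast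
  then have "b # q \<in> leafpos f" using assms by (auto simp: is_child_def)
  then have "nondisjoint_count f (b # q) \<le> ps_depth f"
    unfolding depth by (intro Max_ge) (simp_all add: finite_leafpos)
  then show ?thesis using nondisjoint_count_Cons[OF assms] q(2) by simp
qed

section \<open>Induction over weak nodes\<close>

lemma fsize_ge_1: "1 \<le> fsize f"
  by (cases f) auto

lemma split_rank_le_fpoly_by_balance:
  fixes c :: "'a::comm_semiring_1 formula"
  assumes "fvars c \<subseteq> Yset m \<union> Zset m" "aY m c \<le> x"
  shows "split_rank_le (Mval S (fpoly c)) (2 ^ n * real (fsize c) * 2 powr x)"
proof (rule split_rank_le_mono[OF split_rank_le_fpoly_trivial[OF assms(1)]])
  have "1 \<le> (2::real) ^ n * real (fsize c)"
    using mult_mono[of 1 "(2::real) ^ n" 1 "real (fsize c)"] fsize_ge_1[of c] by simp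
  moreover have "2 powr aY m c \<le> 2 powr x" using assms(2) by simp
  ultimately show "2 powr aY m c \<le> 2 ^ n * real (fsize c) * 2 powr x"
    by (metis mult_1 mult_mono powr_ge_zero zero_le_one order_trans)
qed

definition weak_bound :: "nat \<Rightarrow> nat \<Rightarrow> real \<Rightarrow> 'a formula \<Rightarrow> real" where
  "weak_bound s m k f = 2 ^ (s * ps_depth f) * real (fsize f) * 2 powr (bY m f - k / 2)"

lemma split_rank_le_child:
  fixes f c :: "'a::comm_semiring_1 formula"
  assumes IH: "weak m k c \<Longrightarrow> split_rank_le (Mval S (fpoly c)) (weak_bound s m k c)"
    and "weak m k f" "\<not> unbalanced m k f" "is_child f b c" "fvars f \<subseteq> Yset m \<union> Zset m"
  shows "split_rank_le (Mval S (fpoly c))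
    (2 ^ (s * ps_depth c) * real (fsize c) * 2 powr (bY m f - k / 2))"
proof -
  have sub: "fvars c \<subseteq> fvars f"
    using assms(4) fvars_subf[of f "[b]"] by (simp add: is_child_def)
  show ?thesis
  proof (cases "bY m f \<le> 2 * bY m c")
    case True
    then have "split_rank_le (Mval S (fpoly c)) (weak_bound s m k c)"
      using IH weak_child[OF assms(2-4)] by blast
    moreover have "2 powr (bY m c - k / 2) \<le> 2 powr (bY m f - k / 2)"
      using bY_mono[OF sub] by simp
    then have "weak_bound s m k c \<le> 2 ^ (s * ps_depth c) * real (fsize c) * 2 powr (bY m f - k / 2)"
      unfolding weak_bound_def by (simp add: mult_left_mono)
    ultimately show ?thesis by (rule split_rank_le_mono)
  next
    case False
    then have "aY m c \<le> bY m f - k / 2"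
      using weak_imp_le_bY[OF assms(2)] aY_le_bY[of m c] by linarith
    then show ?thesis using sub assms(5) by (intro split_rank_le_fpoly_by_balance) auto
  qed
qed

lemma split_rank_le_Plus:
  fixes f1 f2 :: "'a::comm_semiring_1 formula"
  assumes IH1: "weak m k f1 \<Longrightarrow> split_rank_le (Mval S (fpoly f1)) (weak_bound s m k f1)"
    and IH2: "weak m k f2 \<Longrightarrow> split_rank_le (Mval S (fpoly f2)) (weak_bound s m k f2)"
    and "weak m k (Plus f1 f2)" "\<not> unbalanced m k (Plus f1 f2)" "fvars (Plus f1 f2) \<subseteq> Yset m \<union> Zset m"
  shows "split_rank_le (Mval S (fpoly (Plus f1 f2))) (weak_bound s m k (Plus f1 f2))"
proof -
  let ?f = "Plus f1 f2" and ?X = "2 powr (bY m (Plus f1 f2) - k / 2)"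
  have "ps_depth f1 \<le> ps_depth ?f" "ps_depth f2 \<le> ps_depth ?f"
    using ps_depth_child[OF is_child_Plus(1)] ps_depth_child[OF is_child_Plus(2)]
    by (simp_all add: nondisjoint_prod_def)
  then have "(2::real) ^ (s * ps_depth f1) \<le> 2 ^ (s * ps_depth ?f)" "(2::real) ^ (s * ps_depth f2) \<le> 2 ^ (s * ps_depth ?f)"
    by (auto intro: power_increasing)
  then have "2 ^ (s * ps_depth f1) * real (fsize f1) * ?X \<le> 2 ^ (s * ps_depth ?f) * real (fsize f1) * ?X"
    "2 ^ (s * ps_depth f2) * real (fsize f2) * ?X \<le> 2 ^ (s * ps_depth ?f) * real (fsize f2) * ?X"
    by (intro mult_right_mono; simp)+
  moreover have "0 \<le> 2 ^ (s * ps_depth ?f) * ?X" by simp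
  moreover have "2 ^ (s * ps_depth ?f) * real (fsize ?f) * ?X = 2 ^ (s * ps_depth ?f) * real (fsize f1) * ?X
      + 2 ^ (s * ps_depth ?f) * real (fsize f2) * ?X + 2 ^ (s * ps_depth ?f) * ?X"
    by (simp add: algebra_simps)
  ultimately have bound: "2 ^ (s * ps_depth f1) * real (fsize f1) * ?X + 2 ^ (s * ps_depth f2) * real (fsize f2) * ?X
      \<le> weak_bound s m k ?f"
    unfolding weak_bound_def by linarith
  have "split_rank_le (Mval S (fpoly f1)) (2 ^ (s * ps_depth f1) * real (fsize f1) * ?X)"
    by (rule split_rank_le_child[OF _ assms(3,4) is_child_Plus(1) assms(5)]) (rule IH1)
  moreover have "split_rank_le (Mval S (fpoly f2)) (2 ^ (s * ps_depth f2) * real (fsize f2) * ?X)"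
    by (rule split_rank_le_child[OF _ assms(3,4) is_child_Plus(2) assms(5)]) (rule IH2)
  ultimately have "split_rank_le (Mval S (fpoly ?f))
      (2 ^ (s * ps_depth f1) * real (fsize f1) * ?X + 2 ^ (s * ps_depth f2) * real (fsize f2) * ?X)"
    by (rule split_rank_le_add) (simp add: Mval_add)
  then show ?thesis using bound by (rule split_rank_le_mono)
qed

lemma split_rank_le_mult_trivial:
  fixes c c' :: "'a::comm_semiring_1 formula"
  assumes "split_rank_le (Mval S (fpoly c)) (weak_bound s m k c)"
    "fvars c \<inter> fvars c' = {}" "fvars c' \<subseteq> Yset m \<union> Zset m" "ps_depth c \<le> d" "fsize c \<le> n"
  shows "split_rank_le (Mval S (fpoly c * fpoly c'))
    (2 ^ (s * d) * real n * 2 powr (bY m c + bY m c' - k / 2))"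
proof -
  have "split_rank_le (Mval S (fpoly c * fpoly c')) (weak_bound s m k c * 2 powr aY m c')"
    by (rule split_rank_le_Mval_mult_disjoint[OF assms(1) split_rank_le_fpoly_trivial[OF assms(3)],
          of "fvars c" "fvars c'"])
       (use keys_fpoly_subset_fvars assms(2) in blast)+
  moreover have "weak_bound s m k c * 2 powr aY m c'
      \<le> 2 ^ (s * d) * real n * 2 powr (bY m c + bY m c' - k / 2)"
  proof -
    have "weak_bound s m k c * 2 powr aY m c' \<le> weak_bound s m k c * 2 powr bY m c'"
      using aY_le_bY[of m c'] by (intro mult_left_mono) (simp_all add: weak_bound_def)
    also have "\<dots> = 2 ^ (s * ps_depth c) * real (fsize c) * 2 powr (bY m c + bY m c' - k / 2)"
      by (simp add: weak_bound_def powr_add[symmetric] algebra_simps)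
    also have "\<dots> \<le> 2 ^ (s * d) * real n * 2 powr (bY m c + bY m c' - k / 2)"
      using assms(4,5) by (intro mult_right_mono mult_mono power_increasing) simp_all
    finally show ?thesis .
  qed
  ultimately show ?thesis by (rule split_rank_le_mono)
qed

lemma split_rank_le_mult_sparse:
  fixes g h :: "'a::comm_semiring_1 mpoly"
  assumes "split_rank_le (Mval S g) (2 ^ (s * d') * real n' * X)"
    "card (Poly_Mapping.keys h) \<le> 2 ^ s" "d' + 1 \<le> d" "n' \<le> n" "0 \<le> X"
  shows "split_rank_le (Mval S (h * g)) (2 ^ (s * d) * real n * X)"
proof (rule split_rank_le_mono[OF split_rank_le_Mval_mult_sparse[OF assms(1)]])
  have "real (card (Poly_Mapping.keys h)) \<le> 2 ^ s"
    using assms(2) by (metis of_nat_le_iff of_nat_numeral of_nat_power)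
  then have "real (card (Poly_Mapping.keys h)) * (2 ^ (s * d') * real n' * X) \<le> 2 ^ s * (2 ^ (s * d') * real n' * X)"
    using assms(5) by (intro mult_right_mono) simp_all
  also have "\<dots> = 2 ^ (s * (d' + 1)) * real n' * X"
    by (simp add: power_add algebra_simps)
  also have "\<dots> \<le> 2 ^ (s * d) * real n * X"
    using assms(3-5) by (intro mult_right_mono mult_mono power_increasing) simp_all
  finally show "real (card (Poly_Mapping.keys h)) * (2 ^ (s * d') * real n' * X) \<le> 2 ^ (s * d) * real n * X" .
qed

lemma split_rank_le_Prod_disjoint:
  fixes f1 f2 :: "'a::comm_semiring_1 formula"
  assumes IH1: "weak m k f1 \<Longrightarrow> split_rank_le (Mval S (fpoly f1)) (weak_bound s m k f1)"
    and IH2: "weak m k f2 \<Longrightarrow> split_rank_le (Mval S (fpoly f2)) (weak_bound s m k f2)"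
    and "weak m k (Prod f1 f2)" "\<not> unbalanced m k (Prod f1 f2)" "fvars (Prod f1 f2) \<subseteq> Yset m \<union> Zset m"
    and disj: "fvars f1 \<inter> fvars f2 = {}"
  shows "split_rank_le (Mval S (fpoly (Prod f1 f2))) (weak_bound s m k (Prod f1 f2))"
proof -
  let ?f = "Prod f1 f2"
  have depth: "ps_depth f1 \<le> ps_depth ?f" "ps_depth f2 \<le> ps_depth ?f"
    using ps_depth_child[OF is_child_Prod(1)[of f1 f2]] ps_depth_child[OF is_child_Prod(2)[of f1 f2]]
    by simp_all
  have bY: "bY m ?f = bY m f1 + bY m f2" by (rule bY_union_disjoint) (simp_all add: disj)
  consider "bY m ?f \<le> 2 * bY m f1" | "bY m ?f \<le> 2 * bY m f2" using bY by linarith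
  then show ?thesis
  proof cases
    case 1
    then have "weak m k f1" by (rule weak_child[OF assms(3,4) is_child_Prod(1)])
    then have "split_rank_le (Mval S (fpoly f1)) (weak_bound s m k f1)" by (rule IH1)
    then have "split_rank_le (Mval S (fpoly f1 * fpoly f2))
        (2 ^ (s * ps_depth ?f) * real (fsize ?f) * 2 powr (bY m f1 + bY m f2 - k / 2))"
      by (rule split_rank_le_mult_trivial) (use assms(5) disj depth in auto)
    then show ?thesis by (simp add: weak_bound_def bY)
  next
    case 2
    then have "weak m k f2" by (rule weak_child[OF assms(3,4) is_child_Prod(2)])
    then have "split_rank_le (Mval S (fpoly f2)) (weak_bound s m k f2)" by (rule IH2)
    then have "split_rank_le (Mval S (fpoly f2 * fpoly f1))
        (2 ^ (s * ps_depth ?f) * real (fsize ?f) * 2 powr (bY m f2 + bY m f1 - k / 2))"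
      by (rule split_rank_le_mult_trivial) (use assms(5) disj depth in auto)
    then show ?thesis by (simp add: weak_bound_def bY mult.commute add.commute)
  qed
qed

lemma split_rank_le_Prod_sparse:
  fixes f1 f2 :: "'a::comm_semiring_1 formula"
  assumes IH1: "weak m k f1 \<Longrightarrow> split_rank_le (Mval S (fpoly f1)) (weak_bound s m k f1)"
    and IH2: "weak m k f2 \<Longrightarrow> split_rank_le (Mval S (fpoly f2)) (weak_bound s m k f2)"
    and "weak m k (Prod f1 f2)" "\<not> unbalanced m k (Prod f1 f2)" "fvars (Prod f1 f2) \<subseteq> Yset m \<union> Zset m"
    and "nondisjoint_prod (Prod f1 f2)" "sparse_prod s (Prod f1 f2)"
  shows "split_rank_le (Mval S (fpoly (Prod f1 f2))) (weak_bound s m k (Prod f1 f2))"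
proof -
  let ?f = "Prod f1 f2" and ?X = "2 powr (bY m (Prod f1 f2) - k / 2)"
  have depth: "ps_depth f1 + 1 \<le> ps_depth ?f" "ps_depth f2 + 1 \<le> ps_depth ?f"
    using ps_depth_child[OF is_child_Prod(1)[of f1 f2]] ps_depth_child[OF is_child_Prod(2)[of f1 f2]] assms(6)
    by simp_all
  have "card (Poly_Mapping.keys (fpoly f1)) \<le> 2 ^ s \<or> card (Poly_Mapping.keys (fpoly f2)) \<le> 2 ^ s"
    using assms(7) by (simp add: sparse_prod_def)
  then show ?thesis
  proof
    assume sparse: "card (Poly_Mapping.keys (fpoly f1)) \<le> 2 ^ s"
    have "split_rank_le (Mval S (fpoly f2)) (2 ^ (s * ps_depth f2) * real (fsize f2) * ?X)"
      by (rule split_rank_le_child[OF _ assms(3,4) is_child_Prod(2) assms(5)]) (rule IH2)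
    then have "split_rank_le (Mval S (fpoly f1 * fpoly f2)) (weak_bound s m k ?f)"
      unfolding weak_bound_def by (rule split_rank_le_mult_sparse[OF _ sparse]) (use depth in simp_all)
    then show ?thesis by simp
  next
    assume sparse: "card (Poly_Mapping.keys (fpoly f2)) \<le> 2 ^ s"
    have "split_rank_le (Mval S (fpoly f1)) (2 ^ (s * ps_depth f1) * real (fsize f1) * ?X)"
      by (rule split_rank_le_child[OF _ assms(3,4) is_child_Prod(1) assms(5)]) (rule IH1)
    then have "split_rank_le (Mval S (fpoly f2 * fpoly f1)) (weak_bound s m k ?f)"
      unfolding weak_bound_def by (rule split_rank_le_mult_sparse[OF _ sparse]) (use depth in simp_all)
    then show ?thesis by (simp add: mult.commute)
  qed
qed

lemma split_rank_le_unbalanced: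
  fixes f :: "'a::comm_semiring_1 formula"
  assumes "fvars f \<subseteq> Yset m \<union> Zset m" "unbalanced m k f"
  shows "split_rank_le (Mval S (fpoly f)) (weak_bound s m k f)"
  unfolding weak_bound_def using assms aY_le_bY[of m f]
  by (intro split_rank_le_fpoly_by_balance) (auto simp: unbalanced_def)

definition products_sparse_or_disjoint :: "nat \<Rightarrow> 'a::comm_semiring_1 formula \<Rightarrow> bool" where
  "products_sparse_or_disjoint s f \<longleftrightarrow> (\<forall>p\<in>positions f. (\<exists>f1 f2. subf f p = Prod f1 f2) \<longrightarrow>
     disjoint_prod (subf f p) \<or> sparse_prod s (subf f p))"

lemma products_sparse_or_disjoint_subf:
  "products_sparse_or_disjoint s f \<Longrightarrow> v \<in> positions f \<Longrightarrow> products_sparse_or_disjoint s (subf f v)"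
  unfolding products_sparse_or_disjoint_def by (metis subf_append)

lemma Nil_in_positions: "[] \<in> positions f"
  by (cases f) auto

lemma products_sparse_or_disjoint_children:
  assumes "products_sparse_or_disjoint s f" "f = Plus f1 f2 \<or> f = Prod f1 f2"
  shows "products_sparse_or_disjoint s f1" "products_sparse_or_disjoint s f2"
  using products_sparse_or_disjoint_subf[OF assms(1), of "[False]"]
    products_sparse_or_disjoint_subf[OF assms(1), of "[True]"] assms(2)
  by (auto simp: Nil_in_positions)

lemma split_rank_le_weak:
  fixes f :: "'a::comm_semiring_1 formula"
  assumes "products_sparse_or_disjoint s f" "fvars f \<subseteq> Yset m \<union> Zset m" "weak m k f"
  shows "split_rank_le (Mval S (fpoly f)) (weak_bound s m k f)"
  using assms
proof (induction f)
  case (Var x)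
  then show ?case by (intro split_rank_le_unbalanced weak_leaf) (simp_all add: leafpos_Var)
next
  case (Cst c)
  then show ?case by (intro split_rank_le_unbalanced weak_leaf) (simp_all add: leafpos_Cst)
next
  case (Plus f1 f2)
  note sub = products_sparse_or_disjoint_children[OF Plus.prems(1), of f1 f2]
  show ?case
  proof (cases "unbalanced m k (Plus f1 f2)")
    case False
    then show ?thesis using Plus sub by (intro split_rank_le_Plus) auto
  qed (use Plus split_rank_le_unbalanced in blast)
next
  case (Prod f1 f2)
  note sub = products_sparse_or_disjoint_children[OF Prod.prems(1), of f1 f2]
  have "disjoint_prod (Prod f1 f2) \<or> sparse_prod s (Prod f1 f2)"
    using Prod.prems(1) by (force simp: products_sparse_or_disjoint_def)
  show ?case
  proof (cases "unbalanced m k (Prod f1 f2)")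
    case False
    then show ?thesis
    proof (cases "fvars f1 \<inter> fvars f2 = {}")
      case True
      then show ?thesis using Prod sub False by (intro split_rank_le_Prod_disjoint) auto
    next
      case nondisjoint: False
      then show ?thesis using Prod sub False \<open>disjoint_prod _ \<or> _\<close>
        by (intro split_rank_le_Prod_sparse) (auto simp: disjoint_prod_def nondisjoint_prod_def)
    qed
  qed (use Prod split_rank_le_unbalanced in blast)
qed

theorem lemma8:
  fixes \<Phi> :: "'a::field formula" and m s d :: nat and k :: real and v :: "bool list"
  assumes "fvars \<Phi> \<subseteq> Yset m \<union> Zset m"
    and "product_sparse s d \<Phi>"
    and "v \<in> positions \<Phi>"
    and "weak m k (subf \<Phi> v)"
  shows "real (maxrank m (fpoly (subf \<Phi> v)))
           \<le> 2 ^ (s * ps_depth (subf \<Phi> v)) * real (fsize (subf \<Phi> v))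
             * 2 powr (bY m (subf \<Phi> v) - k / 2)"
proof -
  have "products_sparse_or_disjoint s \<Phi>"
    using assms(2) by (simp add: product_sparse_def products_sparse_or_disjoint_def)
  then have "products_sparse_or_disjoint s (subf \<Phi> v)"
    using assms(3) by (rule products_sparse_or_disjoint_subf)
  moreover have "fvars (subf \<Phi> v) \<subseteq> Yset m \<union> Zset m"
    using fvars_subf assms(1) by blast
  ultimately show ?thesis
    using split_rank_le_weak[OF _ _ assms(4)] maxrank_le unfolding weak_bound_def by blast
qed

end
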